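(* For all integers $k\ge 1$ and $n>2k$, $b_{2k}(n)-b_{2k}(n-1)\ge\frac12\binom{n-1}{2k-1}$.
   Context: For $n$ and $t$ with $n/2+t$ a nonnegative integer and $|t|\le n/2$, ${\cal B}^{(2k)}(n,t)$ is the $2k$-uniform hypergraph whose vertex set of size $n$ is partitioned into $V_1,V_2$ with $|V_1|=n/2+t$, $|V_2|=n/2-t$, and whose edges are all $2k$-subsets meeting each of $V_1,V_2$ in an odd number of elements; $b_{2k}(n)$ is the maximum of its number of edges over all admissible $t$. *)

theory Defs
  imports Complex_Main
begin

definition admissible :: "nat \<Rightarrow> real \<Rightarrow> bool" where
  "admissible n t \<longleftrightarrow> real n / 2 + t \<in> \<nat> \<and> \<bar>t\<bar> \<le> real n / 2"

definition part1 :: "nat \<Rightarrow> real \<Rightarrow> nat set" where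
  "part1 n t = {0..<nat \<lfloor>real n / 2 + t\<rfloor>}"

definition part2 :: "nat \<Rightarrow> real \<Rightarrow> nat set" where
  "part2 n t = {0..<n} - part1 n t"

definition B_edges :: "nat \<Rightarrow> nat \<Rightarrow> real \<Rightarrow> nat set set" where
  "B_edges k n t = {e. e \<subseteq> {0..<n} \<and> card e = 2 * k \<and>
      odd (card (e \<inter> part1 n t)) \<and> odd (card (e \<inter> part2 n t))}"

text \<open>b_{2k}(n): maximum number of edges over admissible t.\<close>
definition b :: "nat \<Rightarrow> nat \<Rightarrow> nat" where
  "b k n = Max {card (B_edges k n t) | t. admissible n t}"

end

theory Submission
  imports Defs
begin

text \<open>Since edges have even size, an edge meets V2 oddly iff it meets V1 oddly, so b_2k(n)
  is the maximum over a \<le> n of the number N(a, n - a) (odd_meet_count) of 2k-subsets of an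
  n-set meeting a fixed a-set oddly. Take a optimal for n - 1 and add the new vertex either to
  the a-part or to the other part. Summed over both choices, a 2k-set avoiding the new vertex
  is counted twice as often as in N(a, n - 1 - a), while a 2k-set containing it is counted
  exactly once, because adding the vertex to the a-part flips the parity. Hence
  2 b_2k(n) \<ge> 2 b_2k(n - 1) + C(n - 1, 2k - 1).\<close>

definition odd_meet_count :: "nat \<Rightarrow> nat \<Rightarrow> nat \<Rightarrow> nat" where
  "odd_meet_count m a c = (\<Sum>i\<le>m. if odd i then (a choose i) * (c choose (m - i)) else 0)"

lemma card_subsets_with_meet_card:
  assumes "finite X" "A \<subseteq> X" "i \<le> m"
  shows "card {e. e \<subseteq> X \<and> card e = m \<and> card (e \<inter> A) = i}
           = (card A choose i) * (card (X - A) choose (m - i))"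
proof -
  let ?pairs = "{x. x \<subseteq> A \<and> card x = i} \<times> {y. y \<subseteq> X - A \<and> card y = m - i}"
  have finite_sub: "finite e" if "e \<subseteq> X" for e
    using that \<open>finite X\<close> finite_subset by blast
  have "bij_betw (\<lambda>(x, y). x \<union> y) ?pairs {e. e \<subseteq> X \<and> card e = m \<and> card (e \<inter> A) = i}"
  proof (rule bij_betw_byWitness[where f' = "\<lambda>e. (e \<inter> A, e - A)"])
    have "x \<union> y \<subseteq> X" "card (x \<union> y) = card x + card y" "(x \<union> y) \<inter> A = x"
      if "x \<subseteq> A" "y \<subseteq> X - A" for x y
      using that assms by (auto intro!: card_Un_disjoint finite_sub)
    then show "(\<lambda>(x, y). x \<union> y) ` ?pairs \<subseteq> {e. e \<subseteq> X \<and> card e = m \<and> card (e \<inter> A) = i}"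
      using \<open>i \<le> m\<close> by auto
    show "(\<lambda>e. (e \<inter> A, e - A)) ` {e. e \<subseteq> X \<and> card e = m \<and> card (e \<inter> A) = i} \<subseteq> ?pairs"
      using card_Int_Diff[OF finite_sub, of _ A] by fastforce
  qed auto
  then have "card {e. e \<subseteq> X \<and> card e = m \<and> card (e \<inter> A) = i} = card ?pairs"
    by (simp add: bij_betw_same_card)
  also have "\<dots> = (card A choose i) * (card (X - A) choose (m - i))"
    using assms by (simp add: card_cartesian_product n_subsets finite_subset)
  finally show ?thesis .
qed

lemma card_subsets_by_meet_card:
  assumes "finite X" "A \<subseteq> X"
  shows "card {e. e \<subseteq> X \<and> card e = m \<and> P (card (e \<inter> A))}
           = (\<Sum>i\<le>m. if P i then (card A choose i) * (card (X - A) choose (m - i)) else 0)"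
proof -
  let ?S = "{e. e \<subseteq> X \<and> card e = m \<and> P (card (e \<inter> A))}"
  have "finite ?S" using \<open>finite X\<close> by simp
  moreover have "(\<lambda>e. card (e \<inter> A)) ` ?S \<subseteq> {i \<in> {..m}. P i}"
    using \<open>finite X\<close> by (auto intro!: card_mono finite_subset[of _ X])
  ultimately have "card ?S = (\<Sum>i\<in>{i \<in> {..m}. P i}. card {e \<in> ?S. card (e \<inter> A) = i})"
    unfolding card_eq_sum by (intro sum.group[symmetric]) auto
  also have "\<dots> = (\<Sum>i\<in>{i \<in> {..m}. P i}. (card A choose i) * (card (X - A) choose (m - i)))"
  proof (rule sum.cong)
    fix i assume "i \<in> {i \<in> {..m}. P i}"
    then have "{e \<in> ?S. card (e \<inter> A) = i} = {e. e \<subseteq> X \<and> card e = m \<and> card (e \<inter> A) = i}"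
      by auto
    with \<open>i \<in> _\<close> show "card {e \<in> ?S. card (e \<inter> A) = i}
        = (card A choose i) * (card (X - A) choose (m - i))"
      using card_subsets_with_meet_card[OF assms, of i m] by auto
  qed simp
  finally show ?thesis by (simp add: sum.inter_filter[symmetric])
qed

lemma card_B_edges:
  assumes "real n / 2 + t = real a" "a \<le> n"
  shows "card (B_edges k n t) = odd_meet_count (2 * k) a (n - a)"
proof -
  have part1: "part1 n t = {0..<a}" unfolding part1_def using assms(1) by simp
  have "B_edges k n t = {e. e \<subseteq> {0..<n} \<and> card e = 2 * k \<and> odd (card (e \<inter> part1 n t))}"
  proof -
    have parity: "odd (card (e \<inter> part2 n t)) \<longleftrightarrow> odd (card (e \<inter> part1 n t))"
      if "e \<subseteq> {0..<n}" "card e = 2 * k" for e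
    proof -
      have "e \<inter> part2 n t = e - part1 n t" using that(1) unfolding part2_def by blast
      moreover have "card e = card (e \<inter> part1 n t) + card (e - part1 n t)"
        using card_Int_Diff finite_subset[OF that(1)] by blast
      ultimately show ?thesis using that(2) by presburger
    qed
    then show ?thesis unfolding B_edges_def by blast
  qed
  also have "card \<dots> = odd_meet_count (2 * k) a (n - a)"
  proof -
    have "{0..<n} - {0..<a} = {a..<n}" using assms(2) by auto
    then show ?thesis
      using card_subsets_by_meet_card[of "{0..<n}" "{0..<a}" "2 * k" odd] assms(2)
      by (simp only: part1 odd_meet_count_def card_atLeastLessThan diff_zero) simp
  qed
  finally show ?thesis .
qed

lemma odd_meet_count_Suc_left:
  "odd_meet_count (Suc m) (Suc a) c = odd_meet_count (Suc m) a c
     + (\<Sum>j\<le>m. if even j then (a choose j) * (c choose (m - j)) else 0)"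
proof -
  have "odd_meet_count (Suc m) (Suc a) c = odd_meet_count (Suc m) a c
      + (\<Sum>i\<le>Suc m. if odd i then (a choose (i - 1)) * (c choose (Suc m - i)) else 0)"
    unfolding odd_meet_count_def sum.distrib[symmetric]
  proof (rule sum.cong)
    fix i show "(if odd i then (Suc a choose i) * (c choose (Suc m - i)) else 0)
        = (if odd i then (a choose i) * (c choose (Suc m - i)) else 0)
          + (if odd i then (a choose (i - 1)) * (c choose (Suc m - i)) else 0)"
      by (cases i) (simp_all add: algebra_simps)
  qed simp
  also have "(\<Sum>i\<le>Suc m. if odd i then (a choose (i - 1)) * (c choose (Suc m - i)) else 0)
      = (\<Sum>j\<le>m. if even j then (a choose j) * (c choose (m - j)) else 0)"
    by (subst sum.atMost_Suc_shift) (simp cong: if_cong)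
  finally show ?thesis .
qed

lemma odd_meet_count_Suc:
  "odd_meet_count (Suc m) a c = (\<Sum>i\<le>m. if odd i then (a choose i) * (c choose Suc (m - i)) else 0)
     + (if odd (Suc m) then a choose Suc m else 0)"
  unfolding odd_meet_count_def sum.atMost_Suc by (simp add: Suc_diff_le cong: if_cong)

lemma odd_meet_count_Suc_right:
  "odd_meet_count (Suc m) a (Suc c) = odd_meet_count (Suc m) a c
     + (\<Sum>j\<le>m. if odd j then (a choose j) * (c choose (m - j)) else 0)"
  unfolding odd_meet_count_Suc by (auto simp: sum.distrib[symmetric] algebra_simps intro!: sum.cong)

lemma odd_meet_count_Suc_left_add_Suc_right:
  "odd_meet_count (Suc m) (Suc a) c + odd_meet_count (Suc m) a (Suc c)
     = 2 * odd_meet_count (Suc m) a c + ((a + c) choose m)"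
proof -
  have "(\<Sum>j\<le>m. if even j then (a choose j) * (c choose (m - j)) else 0)
      + (\<Sum>j\<le>m. if odd j then (a choose j) * (c choose (m - j)) else 0)
      = (\<Sum>j\<le>m. (a choose j) * (c choose (m - j)))"
    by (auto simp: sum.distrib[symmetric] intro!: sum.cong)
  also have "\<dots> = (a + c) choose m" by (rule vandermonde)
  finally show ?thesis
    unfolding odd_meet_count_Suc_left odd_meet_count_Suc_right by simp
qed

lemma admissible_iff: "admissible n t \<longleftrightarrow> (\<exists>a\<le>n. real n / 2 + t = real a)"
proof
  assume "admissible n t"
  then obtain a where a: "real n / 2 + t = real a" and "\<bar>t\<bar> \<le> real n / 2"
    unfolding admissible_def by (auto elim: Nats_cases)
  then have "a \<le> n" by linarith
  with a show "\<exists>a\<le>n. real n / 2 + t = real a" by blast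
next
  assume "\<exists>a\<le>n. real n / 2 + t = real a"
  then show "admissible n t" unfolding admissible_def by (auto simp: abs_le_iff)
qed

lemma b_eq_Max: "b k n = Max ((\<lambda>a. odd_meet_count (2 * k) a (n - a)) ` {..n})"
proof -
  have "{card (B_edges k n t) | t. admissible n t} = (\<lambda>a. odd_meet_count (2 * k) a (n - a)) ` {..n}"
  proof (intro equalityI subsetI)
    fix x assume "x \<in> {card (B_edges k n t) | t. admissible n t}"
    then obtain t a where "x = card (B_edges k n t)" "a \<le> n" "real n / 2 + t = real a"
      by (auto simp: admissible_iff)
    then show "x \<in> (\<lambda>a. odd_meet_count (2 * k) a (n - a)) ` {..n}"
      by (simp add: card_B_edges)
  next
    fix x assume "x \<in> (\<lambda>a. odd_meet_count (2 * k) a (n - a)) ` {..n}"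
    then obtain a where "a \<le> n" "x = odd_meet_count (2 * k) a (n - a)" by blast
    then have "admissible n (real a - real n / 2)" "x = card (B_edges k n (real a - real n / 2))"
      by (auto simp: admissible_iff card_B_edges)
    then show "x \<in> {card (B_edges k n t) | t. admissible n t}" by blast
  qed
  then show ?thesis unfolding b_def by simp
qed

lemma odd_meet_count_le_b: "a \<le> n \<Longrightarrow> odd_meet_count (2 * k) a (n - a) \<le> b k n"
  unfolding b_eq_Max by (rule Max_ge) auto

lemma b_attained: "\<exists>a\<le>n. b k n = odd_meet_count (2 * k) a (n - a)"
proof -
  have "b k n \<in> (\<lambda>a. odd_meet_count (2 * k) a (n - a)) ` {..n}"
    unfolding b_eq_Max by (rule Max_in) auto
  then show ?thesis by auto
qed

theorem lemma3p2:
  fixes k n :: nat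
  assumes "k \<ge> 1" and "n > 2 * k"
  shows "real (b k n) - real (b k (n - 1)) \<ge> (1/2) * real ((n - 1) choose (2 * k - 1))"
proof -
  obtain m where n: "n = Suc m" using assms(2) by (cases n) auto
  obtain a where "a \<le> m" and b_m: "b k m = odd_meet_count (2 * k) a (m - a)"
    using b_attained by blast
  have "2 * k = Suc (2 * k - 1)" using assms(1) by simp
  then have "odd_meet_count (2 * k) (Suc a) (m - a) + odd_meet_count (2 * k) a (Suc (m - a))
      = 2 * b k m + (m choose (2 * k - 1))"
    using odd_meet_count_Suc_left_add_Suc_right[of "2 * k - 1" a "m - a"] b_m \<open>a \<le> m\<close> by simp
  moreover have "odd_meet_count (2 * k) (Suc a) (m - a) \<le> b k n"
    using odd_meet_count_le_b[of "Suc a" n k] \<open>a \<le> m\<close> n by simp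
  moreover have "odd_meet_count (2 * k) a (Suc (m - a)) \<le> b k n"
    using odd_meet_count_le_b[of a n k] \<open>a \<le> m\<close> n by (simp add: Suc_diff_le)
  ultimately have "2 * b k m + (m choose (2 * k - 1)) \<le> 2 * b k n" by linarith
  then have "2 * real (b k m) + real (m choose (2 * k - 1)) \<le> 2 * real (b k n)"
    by (metis of_nat_add of_nat_le_iff of_nat_mult of_nat_numeral)
  then show ?thesis using n by simp
qed

end
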